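(* Let $f:\mathbb{R}^n\to\mathbb{R}$ be continuously differentiable, and let $t\mapsto w^t\in\mathbb{R}^n$ be continuously differentiable in $t$ and satisfy the Cauchy-Simplex gradient flow $$\frac{dw^t}{dt} = -\beta\, w^t\odot\Big(\nabla f(w^t) - \big(w^t\cdot\nabla f(w^t)\big)\mathbb{1}\Big)$$ for a constant $\beta>0$. Then, as long as $w^t\in\operatorname{int}(\Delta^n)$ (i.e. $\sum_i w^t_i=1$ and $w^t_i>0$ for all $i$), $t\mapsto f(w^t)$ is a decreasing (non-increasing) function of time; more precisely $\frac{d}{dt}f(w^t)\le 0$.
   Context: $\Delta^n=\{w\in\mathbb{R}^n : \sum_i w_i=1,\ w_i\ge 0\}$ is the probability simplex and $\operatorname{int}(\Delta^n)$ denotes the points of $\Delta^n$ with all coordinates strictly positive. $\odot$ denotes componentwise multiplication, $\mathbb{1}$ the all-ones vector, and $\nabla f$ the gradient of $f$ with respect to $w$. *)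

theory Defs
  imports "HOL-Analysis.Analysis"
begin

definition simplex_interior :: "(real ^ 'n) set" where
  "simplex_interior = {w. (\<Sum>i\<in>UNIV. w $ i) = 1 \<and> (\<forall>i. w $ i > 0)}"

definition hadamard :: "real ^ 'n \<Rightarrow> real ^ 'n \<Rightarrow> real ^ 'n" where
  "hadamard u v = (\<chi> i. u $ i * v $ i)"

definition ones_vec :: "real ^ 'n" where
  "ones_vec = (\<chi> i. 1)"

end

theory Submission
  imports Defs
begin

text \<open>By the chain rule, the derivative of \<open>f(w\<^sup>t)\<close> is \<open>\<nabla>f \<bullet> dw\<^sup>t/dt\<close>, which along the
  Cauchy-Simplex flow equals \<open>-\<beta>\<close> times the variance of the coordinates of \<open>\<nabla>f(w\<^sup>t)\<close>
  under the probability weights \<open>w\<^sup>t\<close>; a variance is nonnegative.\<close>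

lemma inner_hadamard_centered_eq_variance:
  fixes v g :: "real ^ 'n"
  assumes "(\<Sum>i\<in>UNIV. v $ i) = 1"
  shows "g \<bullet> hadamard v (g - (v \<bullet> g) *\<^sub>R ones_vec) = (\<Sum>i\<in>UNIV. v $ i * (g $ i - v \<bullet> g)\<^sup>2)"
proof -
  define m where "m = v \<bullet> g"
  have "m = (\<Sum>i\<in>UNIV. v $ i * g $ i)"
    by (simp add: m_def inner_vec_def)
  then have centered: "(\<Sum>i\<in>UNIV. v $ i * (g $ i - m)) = 0"
    by (simp add: right_diff_distrib sum_subtractf flip: sum_distrib_right assms)
  have "g \<bullet> hadamard v (g - m *\<^sub>R ones_vec) = (\<Sum>i\<in>UNIV. g $ i * (v $ i * (g $ i - m)))"
    by (simp add: inner_vec_def hadamard_def ones_vec_def)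
  also have "\<dots> = (\<Sum>i\<in>UNIV. v $ i * (g $ i - m)\<^sup>2) + m * (\<Sum>i\<in>UNIV. v $ i * (g $ i - m))"
    by (simp add: sum_distrib_left flip: sum.distrib) (simp add: power2_eq_square algebra_simps)
  also have "\<dots> = (\<Sum>i\<in>UNIV. v $ i * (g $ i - m)\<^sup>2)"
    using centered by simp
  finally show ?thesis
    by (simp add: m_def)
qed

lemma inner_hadamard_centered_nonneg:
  fixes v g :: "real ^ 'n"
  assumes "(\<Sum>i\<in>UNIV. v $ i) = 1" and "\<And>i. 0 \<le> v $ i"
  shows "0 \<le> g \<bullet> hadamard v (g - (v \<bullet> g) *\<^sub>R ones_vec)"
  using assms by (simp add: inner_hadamard_centered_eq_variance sum_nonneg)

lemma has_real_derivative_compose_gradient: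
  fixes f :: "'a::real_inner \<Rightarrow> real" and w :: "real \<Rightarrow> 'a"
  assumes "(f has_derivative (\<lambda>h. g \<bullet> h)) (at (w t))"
    and "(w has_vector_derivative w') (at t)"
  shows "((\<lambda>s. f (w s)) has_real_derivative g \<bullet> w') (at t)"
proof -
  have "((\<lambda>s. f (w s)) has_derivative (\<lambda>h. g \<bullet> (h *\<^sub>R w'))) (at t)"
    using has_derivative_compose[OF assms(2)[unfolded has_vector_derivative_def] assms(1)]
    by (simp add: o_def)
  then show ?thesis
    by (simp add: has_field_derivative_def mult.commute[of _ "g \<bullet> w'"])
qed

theorem theorem4p1:
  fixes f :: "real ^ 'n \<Rightarrow> real"
    and gradf :: "real ^ 'n \<Rightarrow> real ^ 'n"
    and w w' :: "real \<Rightarrow> real ^ 'n"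
    and T :: "real set"
    and \<beta> :: real
  assumes f_grad: "\<And>x. (f has_derivative (\<lambda>h. gradf x \<bullet> h)) (at x)"
    and gradf_cont: "continuous_on UNIV gradf"
    and T_open: "open T" and T_interval: "is_interval T"
    and w_deriv: "\<And>t. t \<in> T \<Longrightarrow> (w has_vector_derivative w' t) (at t)"
    and w'_cont: "continuous_on T w'"
    and flow: "\<And>t. t \<in> T \<Longrightarrow>
        w' t = - \<beta> *\<^sub>R hadamard (w t) (gradf (w t) - (w t \<bullet> gradf (w t)) *\<^sub>R ones_vec)"
    and beta_pos: "\<beta> > 0"
    and t_in: "t \<in> T"
    and w_int: "w t \<in> simplex_interior"
  shows "\<exists>D. ((\<lambda>s. f (w s)) has_real_derivative D) (at t) \<and> D \<le> 0"
proof (intro exI conjI)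
  show "((\<lambda>s. f (w s)) has_real_derivative gradf (w t) \<bullet> w' t) (at t)"
    using f_grad w_deriv[OF t_in] by (rule has_real_derivative_compose_gradient)
  have "0 \<le> gradf (w t) \<bullet> hadamard (w t) (gradf (w t) - (w t \<bullet> gradf (w t)) *\<^sub>R ones_vec)"
    using w_int by (intro inner_hadamard_centered_nonneg) (auto simp: simplex_interior_def less_imp_le)
  then show "gradf (w t) \<bullet> w' t \<le> 0"
    using beta_pos by (simp add: flow[OF t_in] mult_nonneg_nonneg)
qed

end
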